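(* Let $X_0, X_1, X_2$ be three observables in a general physical theory with a set of states $\mathcal{S}$. Assume there is a finite set $\lambda(X)\subset\mathbb{R}$ (the spectrum) such that for every state $s\in\mathcal{S}$ and every $k\in\{0,1,2\}$, measuring $X_k$ on $s$ yields an outcome distributed according to a probability distribution $\Pr(X_k=\cdot\,|\,s)$ supported on $\lambda(X)$, and that every element of $\lambda(X)$ is a possible outcome of some $X_k$. Write $\langle X_k\rangle_s=\sum_{a\in\lambda(X)} a\Pr(X_k=a|s)$. Assume (M): for every state $s\in\mathcal{S}$, $\sum_{k=0}^2\langle X_k\rangle_s=0$. For a state $s$, define $$P_3\coloneqq\frac13\sum_{k=0}^2\Big(\Pr(X_k>0\,|\,s)+\tfrac12\Pr(X_k=0\,|\,s)\Big).$$ Let $x_+\coloneqq\min\{x\in\lambda(X):x>0\}$ and $-x_-\coloneqq\min\{x\in\lambda(X):x<0\}$ (each undefined if the corresponding set is empty). Then for every state $s$, $$P_3\le \mathbf{P}_3^G\coloneqq\begin{cases}\big(1+x_+/x_-\big)^{-1} & \text{if } \lambda(X) \text{ contains both positive and negative values and } \big(x_+<x_- \text{ or } 0\notin\lambda(X)\big),\\ 1/2 & \text{otherwise.}\end{cases}$$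
   Context: "General theory" means only that each observable, measured on a state, produces real outcomes with well-defined probabilities; no further structure is assumed beyond the hypotheses stated. The convention $\Theta(0)=1/2$ for the Heaviside step function is what gives the weight $1/2$ to the outcome $0$ in $P_3$. In the paper's convention, when the spectrum is nonnegative or nonpositive one of $x_\pm$ is undefined and the bound is $1/2$. *)

theory Defs
  imports Complex_Main
begin

text \<open>An observable family: Pr k s a is the probability that measuring X_k on state s
  yields outcome a. Spectrum Lam is a finite set of reals.\<close>

definition expval :: "real set \<Rightarrow> (nat \<Rightarrow> 's \<Rightarrow> real \<Rightarrow> real) \<Rightarrow> nat \<Rightarrow> 's \<Rightarrow> real" where
  "expval Lam Pr k s = (\<Sum>a\<in>Lam. a * Pr k s a)"

definition prob_pos :: "real set \<Rightarrow> (nat \<Rightarrow> 's \<Rightarrow> real \<Rightarrow> real) \<Rightarrow> nat \<Rightarrow> 's \<Rightarrow> real" where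
  "prob_pos Lam Pr k s = (\<Sum>a\<in>{x\<in>Lam. x > 0}. Pr k s a)"

definition prob_zero :: "real set \<Rightarrow> (nat \<Rightarrow> 's \<Rightarrow> real \<Rightarrow> real) \<Rightarrow> nat \<Rightarrow> 's \<Rightarrow> real" where
  "prob_zero Lam Pr k s = (\<Sum>a\<in>{x\<in>Lam. x = 0}. Pr k s a)"

definition P3 :: "real set \<Rightarrow> (nat \<Rightarrow> 's \<Rightarrow> real \<Rightarrow> real) \<Rightarrow> 's \<Rightarrow> real" where
  "P3 Lam Pr s = (1/3) * (\<Sum>k<3. prob_pos Lam Pr k s + (1/2) * prob_zero Lam Pr k s)"

definition x_plus :: "real set \<Rightarrow> real" where
  "x_plus Lam = Min {x\<in>Lam. x > 0}"

definition x_minus :: "real set \<Rightarrow> real" where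
  "x_minus Lam = - Min {x\<in>Lam. x < 0}"

definition P3G :: "real set \<Rightarrow> real" where
  "P3G Lam = (if (\<exists>x\<in>Lam. x > 0) \<and> (\<exists>x\<in>Lam. x < 0) \<and>
                   (x_plus Lam < x_minus Lam \<or> 0 \<notin> Lam)
              then inverse (1 + x_plus Lam / x_minus Lam) else 1/2)"

end

theory Submission
  imports Defs
begin

text \<open>Let \<open>P\<close>, \<open>Z\<close>, \<open>N\<close> be the total probability, summed over the three observables, of a
  positive, zero and negative outcome, so \<open>P + Z + N = 3\<close> and \<open>P3 = (P + Z/2)/3\<close>.
  Every positive outcome is at least \<open>x\<^sub>+\<close> and every negative one at least \<open>-x\<^sub>-\<close>, so the
  constraint (M) forces \<open>x\<^sub>+ P \<le> x\<^sub>- N\<close>. Maximising \<open>P + Z/2\<close> under this linear constraint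
  gives \<open>(1 + x\<^sub>+/x\<^sub>-)\<inverse>\<close> when zero mass is worth less than shifting mass to the positive
  side (\<open>x\<^sub>+ < x\<^sub>-\<close>) or is unavailable (\<open>0 \<notin> \<lambda>(X)\<close>), and \<open>1/2\<close> otherwise.\<close>

definition prob_neg :: "real set \<Rightarrow> (nat \<Rightarrow> 's \<Rightarrow> real \<Rightarrow> real) \<Rightarrow> nat \<Rightarrow> 's \<Rightarrow> real" where
  "prob_neg Lam Pr k s = (\<Sum>a\<in>{x\<in>Lam. x < 0}. Pr k s a)"

lemma sum_split_sign:
  fixes f :: "real \<Rightarrow> 'b::comm_monoid_add"
  assumes "finite L"
  shows "sum f L = sum f {x\<in>L. x > 0} + sum f {x\<in>L. x = 0} + sum f {x\<in>L. x < 0}"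
proof -
  have "L = {x\<in>L. x > 0} \<union> {x\<in>L. x = 0} \<union> {x\<in>L. x < 0}"
    by auto
  then have "sum f L = sum f ({x\<in>L. x > 0} \<union> {x\<in>L. x = 0} \<union> {x\<in>L. x < 0})"
    by simp
  also have "\<dots> = sum f {x\<in>L. x > 0} + sum f {x\<in>L. x = 0} + sum f {x\<in>L. x < 0}"
    using assms by (subst sum.union_disjoint; auto)+
  finally show ?thesis .
qed

lemma x_plus_le:
  assumes "finite L" "a \<in> L" "a > 0"
  shows "x_plus L \<le> a"
  using assms by (simp add: x_plus_def)

lemma x_plus_pos:
  assumes "finite L" "\<exists>x\<in>L. x > 0"
  shows "x_plus L > 0"
  using assms unfolding x_plus_def by (subst Min_gr_iff) auto

lemma x_minus_le:
  assumes "finite L" "a \<in> L" "a < 0"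
  shows "- x_minus L \<le> a"
  using assms by (simp add: x_minus_def)

lemma x_minus_pos:
  assumes "finite L" "\<exists>x\<in>L. x < 0"
  shows "x_minus L > 0"
proof -
  have "Min {x\<in>L. x < 0} < 0"
    using assms by (subst Min_less_iff) auto
  then show ?thesis
    by (simp add: x_minus_def)
qed

text \<open>No nonemptiness hypothesis is needed: if \<open>L\<close> has no positive (negative) element, the
  junk value \<open>Min {}\<close> in \<open>x_plus L\<close> (\<open>x_minus L\<close>) multiplies an empty sum.\<close>

lemma weighted_sum_ge_x_plus_x_minus:
  assumes "finite L" "\<And>a. a \<in> L \<Longrightarrow> 0 \<le> p a"
  shows "x_plus L * (\<Sum>a\<in>{x\<in>L. x > 0}. p a) - x_minus L * (\<Sum>a\<in>{x\<in>L. x < 0}. p a)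
           \<le> (\<Sum>a\<in>L. a * p a)"
proof -
  have "x_plus L * (\<Sum>a\<in>{x\<in>L. x > 0}. p a) \<le> (\<Sum>a\<in>{x\<in>L. x > 0}. a * p a)"
    unfolding sum_distrib_left
    using assms by (intro sum_mono mult_right_mono x_plus_le) auto
  moreover have "- x_minus L * (\<Sum>a\<in>{x\<in>L. x < 0}. p a) \<le> (\<Sum>a\<in>{x\<in>L. x < 0}. a * p a)"
    unfolding sum_distrib_left
    using assms by (intro sum_mono mult_right_mono x_minus_le) auto
  moreover have "(\<Sum>a\<in>{x\<in>L. x = 0}. a * p a) = 0"
    by (intro sum.neutral) auto
  ultimately show ?thesis
    using sum_split_sign[OF \<open>finite L\<close>, of "\<lambda>a. a * p a"] by simp
qed

lemma half_zero_mass_le_ratio: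
  fixes P Z N xp xm :: real
  assumes "0 < xp" "0 < xm" "0 \<le> Z" "xp * P \<le> xm * N" "xp < xm \<or> Z = 0"
  shows "P + Z / 2 \<le> (P + Z + N) * inverse (1 + xp / xm)"
proof -
  have "(xp - xm) * Z \<le> 0"
    using assms(3,5) by (auto simp: mult_nonpos_nonneg)
  moreover have "xm * (P + Z + N) - (xm + xp) * (P + Z / 2) = (xm * N - xp * P) - (xp - xm) * Z / 2"
    by (simp add: field_simps)
  ultimately have "(xm + xp) * (P + Z / 2) \<le> xm * (P + Z + N)"
    using assms(4) by linarith
  moreover have "inverse (1 + xp / xm) = xm / (xm + xp)"
    using assms(2) by (simp add: field_simps)
  ultimately show ?thesis
    using assms(1,2) by (simp add: field_simps)
qed

lemma half_zero_mass_le_half: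
  fixes P Z N xp xm :: real
  assumes "0 < xp" "0 \<le> N" "xp * P \<le> xm * N" "xm \<le> xp"
  shows "P + Z / 2 \<le> (P + Z + N) / 2"
proof -
  have "xp * P \<le> xp * N"
    using assms by (meson mult_right_mono order_trans)
  then have "P \<le> N"
    using assms(1) by simp
  then show ?thesis
    by simp
qed

lemma half_zero_mass_le_P3G:
  fixes P Z N :: real
  assumes "finite Lam" "0 \<le> P" "0 \<le> Z" "0 \<le> N"
    and balance: "x_plus Lam * P \<le> x_minus Lam * N"
    and no_pos: "\<not> (\<exists>x\<in>Lam. x > 0) \<Longrightarrow> P = 0"
    and no_neg: "\<not> (\<exists>x\<in>Lam. x < 0) \<Longrightarrow> N = 0"
    and "0 \<notin> Lam \<Longrightarrow> Z = 0"
  shows "P + Z / 2 \<le> (P + Z + N) * P3G Lam"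
proof (cases "\<exists>x\<in>Lam. x > 0")
  case pos: True
  show ?thesis
  proof (cases "\<exists>x\<in>Lam. x < 0")
    case neg: True
    have "0 < x_plus Lam" "0 < x_minus Lam"
      using \<open>finite Lam\<close> pos neg by (simp_all add: x_plus_pos x_minus_pos)
    then show ?thesis
      using assms pos neg half_zero_mass_le_ratio[of "x_plus Lam" "x_minus Lam" Z P N]
        half_zero_mass_le_half[of "x_plus Lam" N P "x_minus Lam" Z]
      by (auto simp: P3G_def)
  next
    case False
    then have "x_plus Lam * P \<le> 0"
      using balance no_neg by simp
    then have "P = 0"
      using x_plus_pos[OF \<open>finite Lam\<close> pos] \<open>0 \<le> P\<close> by (simp add: mult_le_0_iff)
    then show ?thesis
      using False \<open>0 \<le> N\<close> by (simp add: P3G_def)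
  qed
next
  case False
  then show ?thesis
    using no_pos \<open>0 \<le> N\<close> by (simp add: P3G_def)
qed

theorem mainTheorem1:
  fixes S :: "'s set" and Lam :: "real set" and Pr :: "nat \<Rightarrow> 's \<Rightarrow> real \<Rightarrow> real"
  assumes fin: "finite Lam"
    and nonneg: "\<And>s k a. s \<in> S \<Longrightarrow> k < 3 \<Longrightarrow> Pr k s a \<ge> 0"
    and supp: "\<And>s k a. s \<in> S \<Longrightarrow> k < 3 \<Longrightarrow> a \<notin> Lam \<Longrightarrow> Pr k s a = 0"
    and total: "\<And>s k. s \<in> S \<Longrightarrow> k < 3 \<Longrightarrow> (\<Sum>a\<in>Lam. Pr k s a) = 1"
    and attained: "\<And>a. a \<in> Lam \<Longrightarrow> \<exists>s\<in>S. \<exists>k<3. Pr k s a > 0"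
    and M: "\<And>s. s \<in> S \<Longrightarrow> (\<Sum>k<3. expval Lam Pr k s) = 0"
    and s: "s \<in> S"
  shows "P3 Lam Pr s \<le> P3G Lam"
proof -
  define P where "P = (\<Sum>k<3. prob_pos Lam Pr k s)"
  define Z where "Z = (\<Sum>k<3. prob_zero Lam Pr k s)"
  define N where "N = (\<Sum>k<3. prob_neg Lam Pr k s)"
  have masses: "prob_pos Lam Pr k s + prob_zero Lam Pr k s + prob_neg Lam Pr k s = 1" if "k < 3" for k
    using total[OF s that] sum_split_sign[OF fin, of "Pr k s"]
    by (simp add: prob_pos_def prob_zero_def prob_neg_def)
  have "P + Z + N = (\<Sum>k<3. prob_pos Lam Pr k s + prob_zero Lam Pr k s + prob_neg Lam Pr k s)"
    by (simp add: P_def Z_def N_def sum.distrib)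
  also have "\<dots> = 3"
    using masses by simp
  finally have "P + Z + N = 3" .
  moreover have "P3 Lam Pr s = (P + Z / 2) / 3"
    unfolding P3_def P_def Z_def sum.distrib sum_distrib_left[symmetric] by simp
  moreover have "x_plus Lam * P - x_minus Lam * N \<le> (\<Sum>k<3. expval Lam Pr k s)"
    unfolding P_def N_def sum_distrib_left sum_subtractf[symmetric]
    using nonneg[OF s] fin
    by (intro sum_mono) (simp add: prob_pos_def prob_neg_def expval_def weighted_sum_ge_x_plus_x_minus)
  moreover have "0 \<le> P" "0 \<le> Z" "0 \<le> N"
    using nonneg[OF s] by (auto simp: P_def Z_def N_def prob_pos_def prob_zero_def prob_neg_def
        intro!: sum_nonneg)
  moreover have "\<not> (\<exists>x\<in>Lam. x > 0) \<Longrightarrow> P = 0" "\<not> (\<exists>x\<in>Lam. x < 0) \<Longrightarrow> N = 0"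
    "0 \<notin> Lam \<Longrightarrow> Z = 0"
    by (auto simp: P_def Z_def N_def prob_pos_def prob_zero_def prob_neg_def intro!: sum.neutral)
  ultimately show ?thesis
    using half_zero_mass_le_P3G[OF fin, of P Z N] M[OF s] by simp
qed

end
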